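(* Let $G=(V,E)$ be a connected graph with maximum degree $\Delta\ge 2$, $s\in V$, $\mathcal{T}$ the layering tree of $G$ with respect to $s$, and $\ell\ge\ell(\mathcal{T})$ an integer. Let $P$ be a part of $\mathcal{T}$ at depth $k$ and let $i\ge k$. Then $|\mathrm{comp}(P)\cap L_{\le i}|\le \Delta^{\ell+i-k+2}$.
   Context: For a connected graph $G$ and root $s\in V(G)$, the BFS layers are $L_i=\{v: d_G(s,v)=i\}$ for $i\ge 0$, with $L_{\le k}=L_0\cup\dots\cup L_k$, $L_{\ge k}=\bigcup_{j\ge k}L_j$, $L_{-1}=\emptyset$. For each $i\ge 0$, let $S_i^1,\dots,S_i^{s_i}$ be the connected components of $G\setminus L_{\le i-1}$ (i.e. of $G[L_{\ge i}]$), and let $P_i^j=S_i^j\cap L_i$; the nonempty sets $P_i^j$ are the parts at layer (depth) $i$, and the set $\mathcal{P}$ of all parts over all layers partitions $V(G)$. The layering tree $\mathcal{T}=(\mathcal{P},\mathcal{E})$ has the parts as vertices, with $(P,P')\in\mathcal{E}$ iff some $u\in P$, $u'\in P'$ are adjacent in $G$; it is rooted at $\{s\}$. Its length is $\ell(\mathcal{T})=\max_{P\in\mathcal{P}}\max_{u,v\in P} d_G(u,v)$ (distances measured in $G$). For a part $P$, $\mathrm{comp}(P)$ is the union of $P$ and all parts that are descendants of $P$ in the rooted tree $\mathcal{T}$; if $P$ is at layer $k$, this is the connected component of $G\setminus L_{\le k-1}$ containing $P$. *)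

theory Defs
  imports Main
begin

definition graph :: "'a set \<Rightarrow> ('a \<Rightarrow> 'a \<Rightarrow> bool) \<Rightarrow> bool" where
  "graph V E \<longleftrightarrow> finite V \<and> (\<forall>u v. E u v \<longrightarrow> u \<in> V \<and> v \<in> V)
     \<and> (\<forall>u v. E u v \<longrightarrow> E v u) \<and> (\<forall>u. \<not> E u u)"

definition walk_in :: "('b \<Rightarrow> 'b \<Rightarrow> bool) \<Rightarrow> 'b set \<Rightarrow> 'b list \<Rightarrow> bool" where
  "walk_in R S xs \<longleftrightarrow> xs \<noteq> [] \<and> set xs \<subseteq> S
     \<and> (\<forall>i. Suc i < length xs \<longrightarrow> R (xs ! i) (xs ! Suc i))"

definition connected_graph :: "'a set \<Rightarrow> ('a \<Rightarrow> 'a \<Rightarrow> bool) \<Rightarrow> bool" where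
  "connected_graph V E \<longleftrightarrow> V \<noteq> {} \<and>
     (\<forall>u\<in>V. \<forall>v\<in>V. \<exists>xs. walk_in E V xs \<and> hd xs = u \<and> last xs = v)"

definition gdist :: "'a set \<Rightarrow> ('a \<Rightarrow> 'a \<Rightarrow> bool) \<Rightarrow> 'a \<Rightarrow> 'a \<Rightarrow> nat" where
  "gdist V E u v = (LEAST n. \<exists>xs. walk_in E V xs \<and> hd xs = u \<and> last xs = v \<and> length xs = Suc n)"

definition degree :: "'a set \<Rightarrow> ('a \<Rightarrow> 'a \<Rightarrow> bool) \<Rightarrow> 'a \<Rightarrow> nat" where
  "degree V E u = card {v \<in> V. E u v}"

definition max_degree :: "'a set \<Rightarrow> ('a \<Rightarrow> 'a \<Rightarrow> bool) \<Rightarrow> nat" where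
  "max_degree V E = Max (degree V E ` V)"

definition layer :: "'a set \<Rightarrow> ('a \<Rightarrow> 'a \<Rightarrow> bool) \<Rightarrow> 'a \<Rightarrow> nat \<Rightarrow> 'a set" where
  "layer V E s i = {v \<in> V. gdist V E s v = i}"

definition layers_le :: "'a set \<Rightarrow> ('a \<Rightarrow> 'a \<Rightarrow> bool) \<Rightarrow> 'a \<Rightarrow> nat \<Rightarrow> 'a set" where
  "layers_le V E s i = {v \<in> V. gdist V E s v \<le> i}"

definition layers_ge :: "'a set \<Rightarrow> ('a \<Rightarrow> 'a \<Rightarrow> bool) \<Rightarrow> 'a \<Rightarrow> nat \<Rightarrow> 'a set" where
  "layers_ge V E s i = {v \<in> V. i \<le> gdist V E s v}"

definition component_of :: "('a \<Rightarrow> 'a \<Rightarrow> bool) \<Rightarrow> 'a set \<Rightarrow> 'a \<Rightarrow> 'a set" where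
  "component_of E S x = {y. \<exists>xs. walk_in E S xs \<and> hd xs = x \<and> last xs = y}"

definition components :: "('a \<Rightarrow> 'a \<Rightarrow> bool) \<Rightarrow> 'a set \<Rightarrow> 'a set set" where
  "components E S = component_of E S ` S"

definition parts_at :: "'a set \<Rightarrow> ('a \<Rightarrow> 'a \<Rightarrow> bool) \<Rightarrow> 'a \<Rightarrow> nat \<Rightarrow> 'a set set" where
  "parts_at V E s i = {C \<inter> layer V E s i | C. C \<in> components E (layers_ge V E s i)
                         \<and> C \<inter> layer V E s i \<noteq> {}}"

definition parts :: "'a set \<Rightarrow> ('a \<Rightarrow> 'a \<Rightarrow> bool) \<Rightarrow> 'a \<Rightarrow> 'a set set" where
  "parts V E s = (\<Union>i. parts_at V E s i)"

definition tree_adj :: "('a \<Rightarrow> 'a \<Rightarrow> bool) \<Rightarrow> 'a set \<Rightarrow> 'a set \<Rightarrow> bool" where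
  "tree_adj E P Q \<longleftrightarrow> (\<exists>u\<in>P. \<exists>v\<in>Q. E u v)"

definition tree_length :: "'a set \<Rightarrow> ('a \<Rightarrow> 'a \<Rightarrow> bool) \<Rightarrow> 'a \<Rightarrow> nat" where
  "tree_length V E s = Max (\<Union>P\<in>parts V E s. {gdist V E u v | u v. u \<in> P \<and> v \<in> P})"

text \<open>Q is a descendant of P (or P itself) in the layering tree rooted at {s}:
  every tree path from the root {s} to Q passes through P.\<close>
definition tree_desc :: "'a set \<Rightarrow> ('a \<Rightarrow> 'a \<Rightarrow> bool) \<Rightarrow> 'a \<Rightarrow> 'a set \<Rightarrow> 'a set \<Rightarrow> bool" where
  "tree_desc V E s P Q \<longleftrightarrow> Q \<in> parts V E s \<and>
     (\<forall>ps. walk_in (tree_adj E) (parts V E s) ps \<and> hd ps = {s} \<and> last ps = Q \<longrightarrow> P \<in> set ps)"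

definition comp_part :: "'a set \<Rightarrow> ('a \<Rightarrow> 'a \<Rightarrow> bool) \<Rightarrow> 'a \<Rightarrow> 'a set \<Rightarrow> 'a set" where
  "comp_part V E s P = \<Union>{Q. tree_desc V E s P Q}"

end

theory Submission imports Defs begin

text \<open>
  Let \<open>v \<in> comp(P)\<close> and let \<open>s = x\<^sub>0, \<dots>, x\<^sub>m = v\<close> be a shortest path, so \<open>x\<^sub>t \<in> L\<^sub>t\<close>.
  The parts containing \<open>x\<^sub>0, \<dots>, x\<^sub>m\<close> form a walk in the layering tree from the root \<open>{s}\<close>
  to the part of \<open>v\<close>, a descendant of \<open>P\<close>; so the walk passes through \<open>P\<close>, which forces
  \<open>x\<^sub>k \<in> P\<close> and \<open>d(x\<^sub>k, v) \<le> m - k\<close>. Hence, for a fixed \<open>p \<in> P\<close>,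
  \<open>comp(P) \<inter> L\<^bsub>\<le>i\<^esub>\<close> lies in the ball of radius \<open>\<ell> + i - k\<close> around \<open>p\<close>. Spheres grow at
  most by the factor \<open>\<Delta>\<close> from one radius to the next, so for \<open>\<Delta> \<ge> 2\<close> the ball of radius
  \<open>r\<close> has at most \<open>\<Delta>\<^sup>r\<^sup>+\<^sup>1\<close> vertices.
\<close>

lemma walk_in_iff_successively:
  "walk_in R S xs \<longleftrightarrow> xs \<noteq> [] \<and> set xs \<subseteq> S \<and> successively R xs"
  unfolding walk_in_def successively_conv_nth by simp

lemma walk_in_singleton: "u \<in> S \<Longrightarrow> walk_in R S [u]"
  by (simp add: walk_in_iff_successively)

lemma walk_in_append_tl:
  assumes "walk_in R S xs" "walk_in R S ys" "last xs = hd ys"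
  shows "walk_in R S (xs @ tl ys)" "hd (xs @ tl ys) = hd xs" "last (xs @ tl ys) = last ys"
proof -
  obtain y ys' where ys: "ys = y # ys'"
    using assms(2) by (cases ys) (auto simp: walk_in_def)
  then show "walk_in R S (xs @ tl ys)" "hd (xs @ tl ys) = hd xs" "last (xs @ tl ys) = last ys"
    using assms by (auto simp: walk_in_iff_successively successively_append_iff successively_Cons)
qed

lemma walk_in_take:
  assumes "walk_in R S xs" "0 < n" "n \<le> length xs"
  shows "walk_in R S (take n xs)" "hd (take n xs) = hd xs" "last (take n xs) = xs ! (n - 1)"
proof -
  have "successively R (take n xs) \<and> successively R (drop n xs)"
    using successively_append_iff[of R "take n xs" "drop n xs"] assms(1)
    by (simp add: walk_in_iff_successively)
  then show "walk_in R S (take n xs)"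
    using assms by (auto simp: walk_in_iff_successively successively_append_iff dest: in_set_takeD)
  show "hd (take n xs) = hd xs" using assms by (cases xs) (auto simp: walk_in_def)
  show "last (take n xs) = xs ! (n - 1)" using assms by (simp add: last_conv_nth walk_in_def)
qed

lemma walk_in_drop:
  assumes "walk_in R S xs" "n < length xs"
  shows "walk_in R S (drop n xs)" "hd (drop n xs) = xs ! n" "last (drop n xs) = last xs"
proof -
  have "successively R (take n xs) \<and> successively R (drop n xs)"
    using successively_append_iff[of R "take n xs" "drop n xs"] assms(1)
    by (simp add: walk_in_iff_successively)
  then show "walk_in R S (drop n xs)"
    using assms by (auto simp: walk_in_iff_successively successively_append_iff dest: in_set_dropD)
  show "hd (drop n xs) = xs ! n" using assms by (simp add: hd_drop_conv_nth)
  show "last (drop n xs) = last xs" using assms by simp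
qed

lemma walk_in_rev:
  assumes "walk_in R S xs" "\<And>u v. R u v \<Longrightarrow> R v u"
  shows "walk_in R S (rev xs)" "hd (rev xs) = last xs" "last (rev xs) = hd xs"
  using assms by (auto simp: walk_in_iff_successively hd_rev last_rev elim!: successively_mono)

lemma walk_in_map:
  assumes "walk_in R S xs" "\<And>u v. u \<in> S \<Longrightarrow> v \<in> S \<Longrightarrow> R u v \<Longrightarrow> R' (f u) (f v)"
    and "f ` S \<subseteq> S'"
  shows "walk_in R' S' (map f xs)"
  using assms unfolding walk_in_def by (auto simp: subset_iff)

lemma component_of_refl: "x \<in> S \<Longrightarrow> x \<in> component_of R S x"
  unfolding component_of_def using walk_in_singleton[of x S R] by force

lemma component_of_eq:
  assumes sym: "\<And>u v. R u v \<Longrightarrow> R v u" and y: "y \<in> component_of R S x"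
  shows "component_of R S y = component_of R S x"
proof -
  have sub: "component_of R S b \<subseteq> component_of R S a" if ab: "b \<in> component_of R S a" for a b
  proof
    fix z assume "z \<in> component_of R S b"
    then obtain ys where "walk_in R S ys" "hd ys = b" "last ys = z"
      unfolding component_of_def by blast
    moreover obtain xs where "walk_in R S xs" "hd xs = a" "last xs = b"
      using ab unfolding component_of_def by blast
    ultimately show "z \<in> component_of R S a"
      unfolding component_of_def using walk_in_append_tl[of R S xs ys] by auto
  qed
  obtain xs where "walk_in R S xs" "hd xs = x" "last xs = y"
    using y unfolding component_of_def by blast
  then have "x \<in> component_of R S y"
    unfolding component_of_def using walk_in_rev[of R S xs] sym by auto
  then show ?thesis using sub y by blast
qed

lemma parts_at_subset_layer: "Q \<in> parts_at V E s m \<Longrightarrow> Q \<subseteq> layer V E s m"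
  unfolding parts_at_def by auto

locale connected_simple_graph =
  fixes V :: "'a set" and E :: "'a \<Rightarrow> 'a \<Rightarrow> bool"
  assumes graph: "graph V E" and connected: "connected_graph V E"
begin

lemma edge_sym: "E u v \<Longrightarrow> E v u"
  using graph unfolding graph_def by blast

lemma finite_vertices: "finite V"
  using graph unfolding graph_def by blast

lemma degree_le_max_degree: "u \<in> V \<Longrightarrow> card {w \<in> V. E u w} \<le> max_degree V E"
  unfolding max_degree_def degree_def[symmetric] using finite_vertices by simp

lemma gdist_le_walk_length:
  assumes "walk_in E V xs" "hd xs = u" "last xs = v"
  shows "gdist V E u v \<le> length xs - 1"
proof -
  have "length xs = Suc (length xs - 1)" using assms by (cases xs) (auto simp: walk_in_def)
  then show ?thesis unfolding gdist_def using assms by (intro Least_le) blast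
qed

lemma shortest_walk_exists:
  assumes "u \<in> V" "v \<in> V"
  obtains xs where "walk_in E V xs" "hd xs = u" "last xs = v" "length xs = Suc (gdist V E u v)"
proof -
  obtain xs where xs: "walk_in E V xs" "hd xs = u" "last xs = v"
    using connected assms unfolding connected_graph_def by blast
  then have "length xs = Suc (length xs - 1)" by (cases xs) (auto simp: walk_in_def)
  then have "\<exists>n xs. walk_in E V xs \<and> hd xs = u \<and> last xs = v \<and> length xs = Suc n"
    using xs by blast
  then have "\<exists>xs. walk_in E V xs \<and> hd xs = u \<and> last xs = v \<and> length xs = Suc (gdist V E u v)"
    unfolding gdist_def by (rule LeastI_ex)
  then show ?thesis using that by blast
qed

lemma gdist_self: "u \<in> V \<Longrightarrow> gdist V E u u = 0"
  using gdist_le_walk_length[of "[u]"] by (simp add: walk_in_singleton)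

lemma gdist_eq_0_imp_eq:
  assumes "u \<in> V" "v \<in> V" "gdist V E u v = 0"
  shows "u = v"
proof -
  obtain xs where "walk_in E V xs" "hd xs = u" "last xs = v" "length xs = Suc 0"
    using shortest_walk_exists assms by metis
  then show ?thesis by (cases xs) auto
qed

lemma gdist_triangle:
  assumes "u \<in> V" "v \<in> V" "w \<in> V"
  shows "gdist V E u w \<le> gdist V E u v + gdist V E v w"
proof -
  obtain xs where xs: "walk_in E V xs" "hd xs = u" "last xs = v" "length xs = Suc (gdist V E u v)"
    using shortest_walk_exists assms by metis
  obtain ys where ys: "walk_in E V ys" "hd ys = v" "last ys = w" "length ys = Suc (gdist V E v w)"
    using shortest_walk_exists assms by metis
  have "gdist V E u w \<le> length (xs @ tl ys) - 1"
    using walk_in_append_tl[of E V xs ys] xs ys by (intro gdist_le_walk_length) auto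
  then show ?thesis using xs ys by simp
qed

lemma gdist_shortest_walk_nth:
  assumes "walk_in E V xs" "hd xs = u" "length xs = Suc (gdist V E u (last xs))"
    and "t < length xs"
  shows "gdist V E u (xs ! t) = t"
proof -
  have "xs \<noteq> []" "set xs \<subseteq> V" using assms(1) by (simp_all add: walk_in_def)
  then have V: "u \<in> V" "last xs \<in> V" "xs ! t \<in> V"
    using hd_in_set last_in_set nth_mem[OF assms(4)] assms(2) by blast+
  have le: "gdist V E u (xs ! t) \<le> t"
    using walk_in_take[of E V xs "Suc t"] assms gdist_le_walk_length[of "take (Suc t) xs"] by simp
  have "gdist V E (xs ! t) (last xs) \<le> length xs - 1 - t"
    using walk_in_drop[of E V xs t] assms gdist_le_walk_length[of "drop t xs"] by simp
  then have "t \<le> gdist V E u (xs ! t)"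
    using gdist_triangle[OF V(1) V(3) V(2)] assms(3,4) by simp
  then show ?thesis using le by simp
qed

definition sphere :: "'a \<Rightarrow> nat \<Rightarrow> 'a set" where
  "sphere p t = {v \<in> V. gdist V E p v = t}"

definition ball :: "'a \<Rightarrow> nat \<Rightarrow> 'a set" where
  "ball p r = {v \<in> V. gdist V E p v \<le> r}"

lemma sphere_Suc_subset:
  assumes "p \<in> V"
  shows "sphere p (Suc t) \<subseteq> (\<Union>u\<in>sphere p t. {w \<in> V. E u w})"
proof
  fix w assume "w \<in> sphere p (Suc t)"
  then have w: "w \<in> V" "gdist V E p w = Suc t" unfolding sphere_def by auto
  obtain xs where xs: "walk_in E V xs" "hd xs = p" "last xs = w" "length xs = Suc (Suc t)"
    using shortest_walk_exists[OF assms w(1)] w by metis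
  have "xs \<noteq> []" using xs(4) by auto
  then have "xs ! Suc t = w" using last_conv_nth[of xs] xs(3,4) by simp
  then have "E (xs ! t) w" using xs unfolding walk_in_def by auto
  moreover have "xs ! t \<in> sphere p t"
    using gdist_shortest_walk_nth[OF xs(1,2)] xs w unfolding sphere_def walk_in_def by auto
  ultimately show "w \<in> (\<Union>u\<in>sphere p t. {w \<in> V. E u w})" using w by auto
qed

lemma card_sphere_le:
  assumes "p \<in> V"
  shows "card (sphere p t) \<le> max_degree V E ^ t"
proof (induction t)
  case 0
  have "sphere p 0 \<subseteq> {p}" unfolding sphere_def using gdist_eq_0_imp_eq assms by auto
  then show ?case using card_mono[of "{p}"] by fastforce
next
  case (Suc t)
  have "card (sphere p (Suc t)) \<le> card (\<Union>u\<in>sphere p t. {w \<in> V. E u w})"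
    using sphere_Suc_subset[OF assms] finite_vertices
    by (intro card_mono) (auto intro: finite_subset[of _ V])
  also have "\<dots> \<le> (\<Sum>u\<in>sphere p t. card {w \<in> V. E u w})"
    using finite_vertices by (intro card_UN_le) (simp add: sphere_def)
  also have "\<dots> \<le> card (sphere p t) * max_degree V E"
    using sum_bounded_above[of "sphere p t" "\<lambda>u. card {w \<in> V. E u w}" "max_degree V E"]
      degree_le_max_degree by (simp add: sphere_def)
  also have "\<dots> \<le> max_degree V E ^ Suc t" using Suc by simp
  finally show ?case .
qed

lemma card_ball_le:
  assumes "p \<in> V" "max_degree V E \<ge> 2"
  shows "card (ball p r) \<le> max_degree V E ^ Suc r"
proof (induction r)
  case 0
  have "ball p 0 = sphere p 0" unfolding ball_def sphere_def by auto
  then show ?case using card_sphere_le[OF assms(1), of 0] assms(2) by simp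
next
  case (Suc r)
  have "ball p (Suc r) = ball p r \<union> sphere p (Suc r)"
    unfolding ball_def sphere_def by auto
  then have "card (ball p (Suc r)) \<le> card (ball p r) + card (sphere p (Suc r))"
    by (simp add: card_Un_le)
  also have "\<dots> \<le> 2 * max_degree V E ^ Suc r"
    using Suc.IH card_sphere_le[OF assms(1), of "Suc r"] by simp
  also have "\<dots> \<le> max_degree V E ^ Suc (Suc r)"
    using assms(2) by simp
  finally show ?case .
qed

definition part_of :: "'a \<Rightarrow> 'a \<Rightarrow> 'a set" where
  "part_of s w = component_of E (layers_ge V E s (gdist V E s w)) w \<inter> layer V E s (gdist V E s w)"

lemma mem_part_of: "w \<in> V \<Longrightarrow> w \<in> part_of s w"
  unfolding part_of_def layers_ge_def layer_def by (simp add: component_of_refl)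

lemma part_of_in_parts_at: "w \<in> V \<Longrightarrow> part_of s w \<in> parts_at V E s (gdist V E s w)"
  unfolding parts_at_def components_def using mem_part_of[of w s]
  by (auto simp: part_of_def layers_ge_def)

lemma parts_at_eq_part_of:
  assumes "Q \<in> parts_at V E s m" "v \<in> Q"
  shows "Q = part_of s v"
proof -
  obtain x where x: "Q = component_of E (layers_ge V E s m) x \<inter> layer V E s m"
    using assms(1) unfolding parts_at_def components_def by blast
  have v: "v \<in> component_of E (layers_ge V E s m) x" "v \<in> layer V E s m"
    using assms(2) unfolding x by simp_all
  have "gdist V E s v = m"
    using v(2) by (simp add: layer_def)
  moreover have "component_of E (layers_ge V E s m) v = component_of E (layers_ge V E s m) x"
    using edge_sym v(1) by (rule component_of_eq)
  ultimately show ?thesis unfolding x part_of_def by simp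
qed

lemma part_of_root: "s \<in> V \<Longrightarrow> part_of s s = {s}"
  using mem_part_of[of s s] gdist_eq_0_imp_eq
  by (auto simp: part_of_def layer_def gdist_self)

lemma walk_in_parts:
  assumes "walk_in E V xs"
  shows "walk_in (tree_adj E) (parts V E s) (map (part_of s) xs)"
proof (rule walk_in_map[OF assms])
  show "tree_adj E (part_of s u) (part_of s v)" if "u \<in> V" "v \<in> V" "E u v" for u v
    using that mem_part_of unfolding tree_adj_def by blast
  show "part_of s ` V \<subseteq> parts V E s"
    unfolding parts_def using part_of_in_parts_at by blast
qed

lemma comp_part_gdist_from_part:
  assumes "s \<in> V" "P \<in> parts_at V E s k" "v \<in> comp_part V E s P"
  shows "\<exists>q\<in>P. gdist V E q v + k \<le> gdist V E s v"
proof -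
  obtain Q where desc: "tree_desc V E s P Q" and "v \<in> Q"
    using assms(3) unfolding comp_part_def by blast
  moreover from desc obtain m where "Q \<in> parts_at V E s m"
    unfolding tree_desc_def parts_def by blast
  ultimately have Q: "Q = part_of s v" "v \<in> V"
    using parts_at_eq_part_of parts_at_subset_layer[of Q V E s m] by (auto simp: layer_def)
  obtain xs where xs: "walk_in E V xs" "hd xs = s" "last xs = v"
    "length xs = Suc (gdist V E s v)"
    using shortest_walk_exists[OF assms(1) Q(2)] by metis
  have "hd (map (part_of s) xs) = {s}" "last (map (part_of s) xs) = Q"
    using xs Q part_of_root[OF assms(1)] by (auto simp: hd_map last_map walk_in_def)
  then have "P \<in> set (map (part_of s) xs)"
    using desc walk_in_parts[OF xs(1)] unfolding tree_desc_def by blast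
  then obtain t where t: "t < length xs" "P = part_of s (xs ! t)"
    by (auto simp: in_set_conv_nth)
  have "xs ! t \<in> V" using xs(1) t(1) by (auto simp: walk_in_def)
  then have "xs ! t \<in> P" "gdist V E s (xs ! t) = k"
    using t mem_part_of parts_at_subset_layer[OF assms(2)] by (auto simp: layer_def)
  moreover have "gdist V E s (xs ! t) = t"
    using gdist_shortest_walk_nth xs t by simp
  moreover have "gdist V E (xs ! t) v \<le> length xs - 1 - t"
    using walk_in_drop[OF xs(1) t(1)] xs(3) gdist_le_walk_length[of "drop t xs"] by simp
  ultimately show ?thesis using xs(4) t(1) by (intro bexI[of _ "xs ! t"]) auto
qed

lemma gdist_le_tree_length:
  assumes "Q \<in> parts V E s" "u \<in> Q" "v \<in> Q"
  shows "gdist V E u v \<le> tree_length V E s"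
proof -
  have "(\<Union>Q\<in>parts V E s. {gdist V E u v | u v. u \<in> Q \<and> v \<in> Q})
      \<subseteq> (\<lambda>(u, v). gdist V E u v) ` (V \<times> V)"
    unfolding parts_def using parts_at_subset_layer by (fastforce simp: layer_def)
  then have "finite (\<Union>Q\<in>parts V E s. {gdist V E u v | u v. u \<in> Q \<and> v \<in> Q})"
    using finite_vertices finite_subset by blast
  then show ?thesis
    unfolding tree_length_def using assms by (intro Max_ge) blast+
qed

lemma comp_part_layers_le_subset_ball:
  assumes "s \<in> V" "P \<in> parts_at V E s k" "p \<in> P" "tree_length V E s \<le> ell"
  shows "comp_part V E s P \<inter> layers_le V E s i \<subseteq> ball p (ell + (i - k))"
proof
  fix v assume v: "v \<in> comp_part V E s P \<inter> layers_le V E s i"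
  then have "v \<in> V" "gdist V E s v \<le> i" by (auto simp: layers_le_def)
  obtain q where q: "q \<in> P" "gdist V E q v + k \<le> gdist V E s v"
    using comp_part_gdist_from_part[OF assms(1,2)] v by blast
  have "P \<in> parts V E s" "P \<subseteq> V"
    using assms(2) parts_at_subset_layer[OF assms(2)] by (auto simp: parts_def layer_def)
  then have "gdist V E p q \<le> ell"
    using gdist_le_tree_length assms(3,4) q(1) by fastforce
  moreover have "gdist V E p v \<le> gdist V E p q + gdist V E q v"
    using gdist_triangle \<open>P \<subseteq> V\<close> assms(3) q(1) \<open>v \<in> V\<close> by blast
  ultimately show "v \<in> ball p (ell + (i - k))"
    using q(2) \<open>gdist V E s v \<le> i\<close> \<open>v \<in> V\<close> by (simp add: ball_def)
qed

end

theorem mainTheorem5: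
  fixes V :: "'a set" and E :: "'a \<Rightarrow> 'a \<Rightarrow> bool" and s :: 'a
    and Delta ell k i :: nat and P :: "'a set"
  assumes "graph V E" and "connected_graph V E"
    and "Delta = max_degree V E" and "Delta \<ge> 2"
    and "s \<in> V"
    and "ell \<ge> tree_length V E s"
    and "P \<in> parts_at V E s k"
    and "i \<ge> k"
  shows "card (comp_part V E s P \<inter> layers_le V E s i) \<le> Delta ^ (ell + i - k + 2)"
proof -
  interpret connected_simple_graph V E using assms(1,2) by unfold_locales
  obtain p where p: "p \<in> P" using assms(7) unfolding parts_at_def by blast
  then have "p \<in> V" using parts_at_subset_layer[OF assms(7)] by (auto simp: layer_def)
  have "card (comp_part V E s P \<inter> layers_le V E s i) \<le> card (ball p (ell + (i - k)))"
    using comp_part_layers_le_subset_ball[OF assms(5,7) p assms(6)] finite_vertices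
    by (intro card_mono) (auto simp: ball_def)
  also have "\<dots> \<le> Delta ^ Suc (ell + (i - k))"
    using card_ball_le[OF \<open>p \<in> V\<close>] assms(3,4) by simp
  also have "\<dots> \<le> Delta ^ (ell + i - k + 2)"
    using assms(4,8) by (intro power_increasing) auto
  finally show ?thesis .
qed

end
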